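(* In a cylindrical model category, let $s \colon X \to Y$ and $r \colon Y \to X$ be maps and $h \colon \mathrm{Cyl}(X) \to X$ a homotopy from $rs$ to $\mathrm{id}_X$, i.e. $h\circ(\delta_0\otimes X)=rs$ and $h\circ(\delta_1\otimes X)=\mathrm{id}_X$. If $X$ is cofibrant and $Y$ is weakly contractible, then $X$ is weakly contractible.
   Context: An object $Z$ of a model category is weakly contractible if $Z \to 1$ is a weak equivalence. A cylindrical model category is a model category equipped with an adjoint functorial cylinder $\mathrm{Cyl}(X)=\mathbb I\otimes X$ (a left adjoint functor, so preserving the initial object) with natural endpoint inclusions $\delta_k\otimes X\colon X\to \mathrm{Cyl}(X)$ ($k=0,1$) and a natural projection $\mathrm{Cyl}(X)\to X$ retracting both, such that for every cofibration $m$ the Leibniz (pushout) product $\delta_k\hat\otimes m$ with each endpoint inclusion is a trivial cofibration and $(\delta_0\sqcup\delta_1)\hat\otimes m$ is a cofibration. In particular $\delta_k\otimes X\cong\delta_k\hat\otimes(0\to X)$. *)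

theory Defs
  imports Main
begin

record ('o, 'm) cat =
  obj :: "'o set"
  arr :: "'m set"
  dom :: "'m \<Rightarrow> 'o"
  cod :: "'m \<Rightarrow> 'o"
  comp :: "'m \<Rightarrow> 'm \<Rightarrow> 'm"   (* comp C g f = g \<circ> f *)
  ident :: "'o \<Rightarrow> 'm"

definition hom :: "('o, 'm) cat \<Rightarrow> 'm \<Rightarrow> 'o \<Rightarrow> 'o \<Rightarrow> bool" where
  "hom C f a b \<longleftrightarrow> f \<in> arr C \<and> dom C f = a \<and> cod C f = b"

definition category :: "('o, 'm) cat \<Rightarrow> bool" where
  "category C \<longleftrightarrow>
     (\<forall>f \<in> arr C. dom C f \<in> obj C \<and> cod C f \<in> obj C) \<and>
     (\<forall>a \<in> obj C. hom C (ident C a) a a) \<and>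
     (\<forall>f \<in> arr C. \<forall>g \<in> arr C. cod C f = dom C g \<longrightarrow>
         hom C (comp C g f) (dom C f) (cod C g)) \<and>
     (\<forall>f \<in> arr C. comp C f (ident C (dom C f)) = f \<and> comp C (ident C (cod C f)) f = f) \<and>
     (\<forall>f \<in> arr C. \<forall>g \<in> arr C. \<forall>k \<in> arr C. cod C f = dom C g \<longrightarrow> cod C g = dom C k \<longrightarrow>
         comp C k (comp C g f) = comp C (comp C k g) f)"

definition initial :: "('o, 'm) cat \<Rightarrow> 'o \<Rightarrow> bool" where
  "initial C z \<longleftrightarrow> z \<in> obj C \<and> (\<forall>a \<in> obj C. \<exists>!f. hom C f z a)"

definition terminal :: "('o, 'm) cat \<Rightarrow> 'o \<Rightarrow> bool" where
  "terminal C t \<longleftrightarrow> t \<in> obj C \<and> (\<forall>a \<in> obj C. \<exists>!f. hom C f a t)"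

definition pushout :: "('o, 'm) cat \<Rightarrow> 'm \<Rightarrow> 'm \<Rightarrow> 'm \<Rightarrow> 'm \<Rightarrow> 'o \<Rightarrow> bool" where
  "pushout C f g i j P \<longleftrightarrow>
     f \<in> arr C \<and> g \<in> arr C \<and> dom C f = dom C g \<and>
     hom C i (cod C f) P \<and> hom C j (cod C g) P \<and>
     comp C i f = comp C j g \<and>
     (\<forall>Q i' j'. hom C i' (cod C f) Q \<longrightarrow> hom C j' (cod C g) Q \<longrightarrow>
        comp C i' f = comp C j' g \<longrightarrow>
        (\<exists>!u. hom C u P Q \<and> comp C u i = i' \<and> comp C u j = j'))"

definition pullback :: "('o, 'm) cat \<Rightarrow> 'm \<Rightarrow> 'm \<Rightarrow> 'm \<Rightarrow> 'm \<Rightarrow> 'o \<Rightarrow> bool" where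
  "pullback C f g i j P \<longleftrightarrow>
     f \<in> arr C \<and> g \<in> arr C \<and> cod C f = cod C g \<and>
     hom C i P (dom C f) \<and> hom C j P (dom C g) \<and>
     comp C f i = comp C g j \<and>
     (\<forall>Q i' j'. hom C i' Q (dom C f) \<longrightarrow> hom C j' Q (dom C g) \<longrightarrow>
        comp C f i' = comp C g j' \<longrightarrow>
        (\<exists>!u. hom C u Q P \<and> comp C i u = i' \<and> comp C j u = j'))"

definition coproduct :: "('o, 'm) cat \<Rightarrow> 'o \<Rightarrow> 'o \<Rightarrow> 'm \<Rightarrow> 'm \<Rightarrow> 'o \<Rightarrow> bool" where
  "coproduct C A B i j P \<longleftrightarrow>
     hom C i A P \<and> hom C j B P \<and>
     (\<forall>Q i' j'. hom C i' A Q \<longrightarrow> hom C j' B Q \<longrightarrow>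
        (\<exists>!u. hom C u P Q \<and> comp C u i = i' \<and> comp C u j = j'))"

definition finitely_complete :: "('o, 'm) cat \<Rightarrow> bool" where
  "finitely_complete C \<longleftrightarrow> (\<exists>t. terminal C t) \<and>
     (\<forall>f \<in> arr C. \<forall>g \<in> arr C. cod C f = cod C g \<longrightarrow> (\<exists>i j P. pullback C f g i j P))"

definition finitely_cocomplete :: "('o, 'm) cat \<Rightarrow> bool" where
  "finitely_cocomplete C \<longleftrightarrow> (\<exists>z. initial C z) \<and>
     (\<forall>f \<in> arr C. \<forall>g \<in> arr C. dom C f = dom C g \<longrightarrow> (\<exists>i j P. pushout C f g i j P))"

definition llp :: "('o, 'm) cat \<Rightarrow> 'm \<Rightarrow> 'm \<Rightarrow> bool" where
  "llp C i p \<longleftrightarrow>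
     (\<forall>u v. hom C u (dom C i) (dom C p) \<longrightarrow> hom C v (cod C i) (cod C p) \<longrightarrow>
        comp C p u = comp C v i \<longrightarrow>
        (\<exists>d. hom C d (cod C i) (dom C p) \<and> comp C d i = u \<and> comp C p d = v))"

definition retract_of :: "('o, 'm) cat \<Rightarrow> 'm \<Rightarrow> 'm \<Rightarrow> bool" where
  "retract_of C f g \<longleftrightarrow> f \<in> arr C \<and> g \<in> arr C \<and>
     (\<exists>i1 r1 i2 r2.
        hom C i1 (dom C f) (dom C g) \<and> hom C r1 (dom C g) (dom C f) \<and>
        hom C i2 (cod C f) (cod C g) \<and> hom C r2 (cod C g) (cod C f) \<and>
        comp C r1 i1 = ident C (dom C f) \<and> comp C r2 i2 = ident C (cod C f) \<and>
        comp C g i1 = comp C i2 f \<and> comp C f r1 = comp C r2 g)"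

definition model_category :: "('o, 'm) cat \<Rightarrow> 'm set \<Rightarrow> 'm set \<Rightarrow> 'm set \<Rightarrow> bool" where
  "model_category C W Cof Fib \<longleftrightarrow>
     category C \<and> finitely_complete C \<and> finitely_cocomplete C \<and>
     W \<subseteq> arr C \<and> Cof \<subseteq> arr C \<and> Fib \<subseteq> arr C \<and>
     (\<forall>f \<in> arr C. \<forall>g \<in> arr C. cod C f = dom C g \<longrightarrow>
        ((f \<in> W \<and> g \<in> W \<longrightarrow> comp C g f \<in> W) \<and>
         (f \<in> W \<and> comp C g f \<in> W \<longrightarrow> g \<in> W) \<and>
         (g \<in> W \<and> comp C g f \<in> W \<longrightarrow> f \<in> W))) \<and>
     (\<forall>f g. retract_of C f g \<longrightarrow>
        (g \<in> W \<longrightarrow> f \<in> W) \<and> (g \<in> Cof \<longrightarrow> f \<in> Cof) \<and> (g \<in> Fib \<longrightarrow> f \<in> Fib)) \<and>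
     (\<forall>i \<in> Cof. \<forall>p \<in> Fib \<inter> W. llp C i p) \<and>
     (\<forall>i \<in> Cof \<inter> W. \<forall>p \<in> Fib. llp C i p) \<and>
     (\<forall>f \<in> arr C. \<exists>i p. i \<in> Cof \<inter> W \<and> p \<in> Fib \<and> cod C i = dom C p \<and> comp C p i = f) \<and>
     (\<forall>f \<in> arr C. \<exists>i p. i \<in> Cof \<and> p \<in> Fib \<inter> W \<and> cod C i = dom C p \<and> comp C p i = f)"

definition cofibrant :: "('o, 'm) cat \<Rightarrow> 'm set \<Rightarrow> 'o \<Rightarrow> bool" where
  "cofibrant C Cof X \<longleftrightarrow> X \<in> obj C \<and>
     (\<forall>z f. initial C z \<longrightarrow> hom C f z X \<longrightarrow> f \<in> Cof)"

definition weakly_contractible :: "('o, 'm) cat \<Rightarrow> 'm set \<Rightarrow> 'o \<Rightarrow> bool" where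
  "weakly_contractible C W Z \<longleftrightarrow> Z \<in> obj C \<and>
     (\<forall>t f. terminal C t \<longrightarrow> hom C f Z t \<longrightarrow> f \<in> W)"

definition is_functor :: "('o, 'm) cat \<Rightarrow> ('o \<Rightarrow> 'o) \<Rightarrow> ('m \<Rightarrow> 'm) \<Rightarrow> bool" where
  "is_functor C Fo Fa \<longleftrightarrow>
     (\<forall>a \<in> obj C. Fo a \<in> obj C) \<and>
     (\<forall>f \<in> arr C. hom C (Fa f) (Fo (dom C f)) (Fo (cod C f))) \<and>
     (\<forall>a \<in> obj C. Fa (ident C a) = ident C (Fo a)) \<and>
     (\<forall>f \<in> arr C. \<forall>g \<in> arr C. cod C f = dom C g \<longrightarrow> Fa (comp C g f) = comp C (Fa g) (Fa f))"

definition nat_trans :: "('o, 'm) cat \<Rightarrow> ('o \<Rightarrow> 'o) \<Rightarrow> ('m \<Rightarrow> 'm) \<Rightarrow> ('o \<Rightarrow> 'o) \<Rightarrow> ('m \<Rightarrow> 'm)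
     \<Rightarrow> ('o \<Rightarrow> 'm) \<Rightarrow> bool" where
  "nat_trans C Fo Fa Go Ga \<eta> \<longleftrightarrow>
     (\<forall>a \<in> obj C. hom C (\<eta> a) (Fo a) (Go a)) \<and>
     (\<forall>f \<in> arr C. comp C (\<eta> (cod C f)) (Fa f) = comp C (Ga f) (\<eta> (dom C f)))"

definition left_adjoint :: "('o, 'm) cat \<Rightarrow> ('o \<Rightarrow> 'o) \<Rightarrow> ('m \<Rightarrow> 'm) \<Rightarrow> bool" where
  "left_adjoint C Fo Fa \<longleftrightarrow>
     (\<exists>Go Ga \<phi>. is_functor C Go Ga \<and>
        (\<forall>X \<in> obj C. \<forall>Y \<in> obj C.
            bij_betw (\<phi> X Y) {f. hom C f (Fo X) Y} {g. hom C g X (Go Y)}) \<and>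
        (\<forall>X' X Y Y' a f b. hom C a X' X \<longrightarrow> hom C f (Fo X) Y \<longrightarrow> hom C b Y Y' \<longrightarrow>
            \<phi> X' Y' (comp C b (comp C f (Fa a))) = comp C (Ga b) (comp C (\<phi> X Y f) a)))"

text \<open>Adjoint functorial cylinder Cyl with endpoint inclusions d0, d1 (= delta_k \<otimes> X)
  and projection p retracting both.\<close>
definition functorial_cylinder ::
  "('o, 'm) cat \<Rightarrow> ('o \<Rightarrow> 'o) \<Rightarrow> ('m \<Rightarrow> 'm) \<Rightarrow> ('o \<Rightarrow> 'm) \<Rightarrow> ('o \<Rightarrow> 'm) \<Rightarrow> ('o \<Rightarrow> 'm) \<Rightarrow> bool" where
  "functorial_cylinder C Cylo Cyla d0 d1 p \<longleftrightarrow>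
     is_functor C Cylo Cyla \<and> left_adjoint C Cylo Cyla \<and>
     nat_trans C id id Cylo Cyla d0 \<and> nat_trans C id id Cylo Cyla d1 \<and>
     nat_trans C Cylo Cyla id id p \<and>
     (\<forall>X \<in> obj C. comp C (p X) (d0 X) = ident C X \<and> comp C (p X) (d1 X) = ident C X)"

text \<open>Leibniz product of an endpoint inclusion d with m : A -> B:
  the induced map u : B \<squnion>_A Cyl A -> Cyl B; it must be a trivial cofibration.\<close>
definition leibniz_endpoint_ok ::
  "('o, 'm) cat \<Rightarrow> 'm set \<Rightarrow> 'm set \<Rightarrow> ('o \<Rightarrow> 'o) \<Rightarrow> ('m \<Rightarrow> 'm) \<Rightarrow> ('o \<Rightarrow> 'm) \<Rightarrow> bool" where
  "leibniz_endpoint_ok C W Cof Cylo Cyla d \<longleftrightarrow>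
     (\<forall>m \<in> Cof. \<forall>i j P u.
        pushout C m (d (dom C m)) i j P \<longrightarrow>
        hom C u P (Cylo (cod C m)) \<longrightarrow>
        comp C u i = d (cod C m) \<longrightarrow> comp C u j = Cyla m \<longrightarrow>
        u \<in> Cof \<inter> W)"

text \<open>Leibniz product of the boundary inclusion [d0,d1] : A \<squnion> A -> Cyl A with m : A -> B:
  the induced map u : (B \<squnion> B) \<squnion>_(A \<squnion> A) Cyl A -> Cyl B; it must be a cofibration.\<close>
definition leibniz_boundary_ok ::
  "('o, 'm) cat \<Rightarrow> 'm set \<Rightarrow> ('o \<Rightarrow> 'o) \<Rightarrow> ('m \<Rightarrow> 'm) \<Rightarrow> ('o \<Rightarrow> 'm) \<Rightarrow> ('o \<Rightarrow> 'm) \<Rightarrow> bool" where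
  "leibniz_boundary_ok C Cof Cylo Cyla d0 d1 \<longleftrightarrow>
     (\<forall>m \<in> Cof. \<forall>AA c1 c2 BB e1 e2 w mm i j P u.
        coproduct C (dom C m) (dom C m) c1 c2 AA \<longrightarrow>
        coproduct C (cod C m) (cod C m) e1 e2 BB \<longrightarrow>
        hom C w AA (Cylo (dom C m)) \<longrightarrow>
        comp C w c1 = d0 (dom C m) \<longrightarrow> comp C w c2 = d1 (dom C m) \<longrightarrow>
        hom C mm AA BB \<longrightarrow>
        comp C mm c1 = comp C e1 m \<longrightarrow> comp C mm c2 = comp C e2 m \<longrightarrow>
        pushout C mm w i j P \<longrightarrow>
        hom C u P (Cylo (cod C m)) \<longrightarrow>
        comp C (comp C u i) e1 = d0 (cod C m) \<longrightarrow>
        comp C (comp C u i) e2 = d1 (cod C m) \<longrightarrow>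
        comp C u j = Cyla m \<longrightarrow>
        u \<in> Cof)"

definition cylindrical_model_category ::
  "('o, 'm) cat \<Rightarrow> 'm set \<Rightarrow> 'm set \<Rightarrow> 'm set \<Rightarrow> ('o \<Rightarrow> 'o) \<Rightarrow> ('m \<Rightarrow> 'm)
     \<Rightarrow> ('o \<Rightarrow> 'm) \<Rightarrow> ('o \<Rightarrow> 'm) \<Rightarrow> ('o \<Rightarrow> 'm) \<Rightarrow> bool" where
  "cylindrical_model_category C W Cof Fib Cylo Cyla d0 d1 p \<longleftrightarrow>
     model_category C W Cof Fib \<and>
     functorial_cylinder C Cylo Cyla d0 d1 p \<and>
     leibniz_endpoint_ok C W Cof Cylo Cyla d0 \<and>
     leibniz_endpoint_ok C W Cof Cylo Cyla d1 \<and>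
     leibniz_boundary_ok C Cof Cylo Cyla d0 d1"

end

theory Submission
  imports Defs
begin

text \<open>
  The cylinder is a left adjoint, so it preserves the initial object; hence the Leibniz
  product of \<open>\<delta>\<^sub>0\<close> with \<open>0 \<rightarrow> X\<close> is \<open>\<delta>\<^sub>0 \<otimes> X\<close> itself, a trivial cofibration
  when \<open>X\<close> is cofibrant. Its pushout \<open>Y \<rightarrow> Q\<close> along \<open>s\<close> is again a weak equivalence,
  so \<open>Q\<close> is weakly contractible. The homotopy \<open>h\<close> and the map \<open>r\<close> glue to \<open>H : Q \<rightarrow> X\<close>,
  and \<open>H\<close> retracts \<open>X \<rightarrow> Cyl(X) \<rightarrow> Q\<close> (via \<open>\<delta>\<^sub>1\<close>) because \<open>h \<circ> \<delta>\<^sub>1 = id\<close>.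
  A retract of a weakly contractible object is weakly contractible.
\<close>

lemma hom_arr: "hom C f a b \<Longrightarrow> f \<in> arr C"
  unfolding hom_def by blast

lemma llpD:
  assumes "llp C i q" and "hom C i a b" and "hom C q x y"
    and "hom C u a x" and "hom C v b y" and "comp C q u = comp C v i"
  obtains d where "hom C d b x" and "comp C d i = u" and "comp C q d = v"
proof -
  have "dom C i = a" and "cod C i = b" and "dom C q = x" and "cod C q = y"
    using assms(2,3) unfolding hom_def by auto
  then have "\<exists>d. hom C d b x \<and> comp C d i = u \<and> comp C q d = v"
    using assms(1)[unfolded llp_def, rule_format, of u v] assms(4-6) by simp
  then show ?thesis
    using that by blast
qed

lemma functor_hom: "is_functor C Fo Fa \<Longrightarrow> hom C f a b \<Longrightarrow> hom C (Fa f) (Fo a) (Fo b)"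
  unfolding is_functor_def hom_def by auto

lemma nat_trans_hom: "nat_trans C Fo Fa Go Ga \<eta> \<Longrightarrow> a \<in> obj C \<Longrightarrow> hom C (\<eta> a) (Fo a) (Go a)"
  unfolding nat_trans_def by blast

lemma initial_hom_ex: "initial C z \<Longrightarrow> a \<in> obj C \<Longrightarrow> \<exists>f. hom C f z a"
  unfolding initial_def by blast

lemma pushout_induced:
  assumes "pushout C f g i j P"
    and "hom C i' (cod C f) Q" and "hom C j' (cod C g) Q" and "comp C i' f = comp C j' g"
  obtains u where "hom C u P Q" and "comp C u i = i'" and "comp C u j = j'"
  using assms unfolding pushout_def by blast

context
  fixes C :: "('o, 'm) cat"
  assumes category: "category C"
begin

lemma hom_objs:
  assumes "hom C f a b"
  shows "a \<in> obj C" and "b \<in> obj C"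
  using assms category unfolding category_def hom_def by blast+

lemma hom_ident: "a \<in> obj C \<Longrightarrow> hom C (ident C a) a a"
  using category unfolding category_def by blast

lemma hom_comp:
  assumes "hom C f a b" and "hom C g b c"
  shows "hom C (comp C g f) a c"
  using assms category unfolding category_def hom_def by metis

lemma comp_ident_left: "hom C f a b \<Longrightarrow> comp C (ident C b) f = f"
  using category unfolding category_def hom_def by blast

lemma comp_ident_right: "hom C f a b \<Longrightarrow> comp C f (ident C a) = f"
  using category unfolding category_def hom_def by blast

lemma comp_assoc:
  assumes "hom C f a b" and "hom C g b c" and "hom C k c d"
  shows "comp C k (comp C g f) = comp C (comp C k g) f"
  using assms category unfolding category_def hom_def by metis

lemma initial_hom_unique:
  assumes "initial C z" and "hom C f z a" and "hom C g z a"
  shows "f = g"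
  using assms hom_objs(2)[OF assms(2)] unfolding initial_def by blast

lemma pushout_hom_eqI:
  assumes po: "pushout C f g i j P"
    and x: "hom C x P Q" and y: "hom C y P Q"
    and "comp C x i = comp C y i" and "comp C x j = comp C y j"
  shows "x = y"
proof -
  have f: "hom C f (dom C f) (cod C f)" and g: "hom C g (dom C f) (cod C g)"
    and i: "hom C i (cod C f) P" and j: "hom C j (cod C g) P" and sq: "comp C i f = comp C j g"
    using po unfolding pushout_def hom_def by auto
  have "comp C (comp C y i) f = comp C (comp C y j) g"
    using comp_assoc[OF f i y] comp_assoc[OF g j y] sq by simp
  then have "\<exists>!u. hom C u P Q \<and> comp C u i = comp C y i \<and> comp C u j = comp C y j"
    using po hom_comp[OF i y] hom_comp[OF j y] unfolding pushout_def by blast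
  then show ?thesis
    using assms by blast
qed

lemma pushout_between_initials:
  assumes z: "initial C z" and I: "initial C I"
    and m: "hom C m z X" and g: "hom C g z I" and j: "hom C j I X"
  shows "pushout C m g (ident C X) j X"
  unfolding pushout_def
proof (intro conjI allI impI)
  have X: "X \<in> obj C"
    using hom_objs(2)[OF m] .
  show "hom C (ident C X) (cod C m) X" and "hom C j (cod C g) X"
    using m g j hom_ident[OF X] unfolding hom_def by auto
  show "comp C (ident C X) m = comp C j g"
    using initial_hom_unique[OF z hom_comp[OF m hom_ident[OF X]] hom_comp[OF g j]] .
  fix Q i' j'
  assume i': "hom C i' (cod C m) Q" and j': "hom C j' (cod C g) Q"
  then have i'': "hom C i' X Q" and j'': "hom C j' I Q"
    using m g unfolding hom_def by auto
  show "\<exists>!u. hom C u X Q \<and> comp C u (ident C X) = i' \<and> comp C u j = j'"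
  proof (rule ex1I[of _ i'])
    show "hom C i' X Q \<and> comp C i' (ident C X) = i' \<and> comp C i' j = j'"
      using i'' comp_ident_right[OF i''] initial_hom_unique[OF I hom_comp[OF j i''] j''] by simp
  next
    fix u
    assume "hom C u X Q \<and> comp C u (ident C X) = i' \<and> comp C u j = j'"
    then show "u = i'"
      using comp_ident_right by metis
  qed
qed (use m g hom_arr in \<open>auto simp: hom_def\<close>)

lemma left_adjoint_preserves_initial:
  assumes F: "is_functor C Fo Fa" and L: "left_adjoint C Fo Fa" and z: "initial C z"
  shows "initial C (Fo z)"
proof -
  obtain Go Ga \<phi> where G: "is_functor C Go Ga" and
    adj: "\<forall>X \<in> obj C. \<forall>Y \<in> obj C. bij_betw (\<phi> X Y) {f. hom C f (Fo X) Y} {g. hom C g X (Go Y)}"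
    using L unfolding left_adjoint_def by blast
  have zo: "z \<in> obj C"
    using z unfolding initial_def by blast
  have "\<exists>!f. hom C f (Fo z) a" if a: "a \<in> obj C" for a
  proof -
    have bij: "bij_betw (\<phi> z a) {f. hom C f (Fo z) a} {g. hom C g z (Go a)}"
      using adj zo a by blast
    obtain g where g: "hom C g z (Go a)"
      using initial_hom_ex[OF z] G a unfolding is_functor_def by blast
    then have "{g'. hom C g' z (Go a)} = {g}"
      using initial_hom_unique[OF z g] by blast
    then have image: "\<phi> z a ` {f. hom C f (Fo z) a} = {g}"
      using bij by (simp add: bij_betw_def)
    then obtain f where f: "hom C f (Fo z) a"
      by blast
    moreover have "f' = f" if f': "hom C f' (Fo z) a" for f'
    proof (rule inj_onD[OF bij_betw_imp_inj_on[OF bij]])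
      have "\<phi> z a f' \<in> {g}" and "\<phi> z a f \<in> {g}"
        using f f' unfolding image[symmetric] by auto
      then show "\<phi> z a f' = \<phi> z a f"
        by simp
    qed (use f f' in simp_all)
    ultimately show ?thesis
      by blast
  qed
  moreover have "Fo z \<in> obj C"
    using F zo unfolding is_functor_def by blast
  ultimately show ?thesis
    unfolding initial_def by blast
qed

lemma llp_pushout:
  assumes po: "pushout C f g i j P" and llp: "llp C g q" and q: "q \<in> arr C"
  shows "llp C i q"
  unfolding llp_def
proof (intro allI impI)
  fix u v
  have f: "hom C f (dom C f) (cod C f)" and g: "hom C g (dom C f) (cod C g)"
    and i: "hom C i (cod C f) P" and j: "hom C j (cod C g) P" and sq: "comp C i f = comp C j g"
    using po unfolding pushout_def hom_def by auto
  have q': "hom C q (dom C q) (cod C q)"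
    using q unfolding hom_def by simp
  assume "hom C u (dom C i) (dom C q)" and "hom C v (cod C i) (cod C q)"
  then have u: "hom C u (cod C f) (dom C q)" and v: "hom C v P (cod C q)"
    using i unfolding hom_def by auto
  assume usq: "comp C q u = comp C v i"
  have "comp C q (comp C u f) = comp C (comp C v j) g"
    using comp_assoc[OF f u q'] comp_assoc[OF f i v] comp_assoc[OF g j v] usq sq by simp
  then obtain e where e: "hom C e (cod C g) (dom C q)" "comp C e g = comp C u f" "comp C q e = comp C v j"
    using llpD[OF llp g q' hom_comp[OF f u] hom_comp[OF j v]] by blast
  obtain d where d: "hom C d P (dom C q)" "comp C d i = u" "comp C d j = e"
    using pushout_induced[OF po u e(1) e(2)[symmetric]] .
  have "comp C q d = v"
  proof (rule pushout_hom_eqI[OF po hom_comp[OF d(1) q'] v])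
    show "comp C (comp C q d) i = comp C v i"
      using comp_assoc[OF i d(1) q'] d usq by simp
    show "comp C (comp C q d) j = comp C v j"
      using comp_assoc[OF j d(1) q'] d e by simp
  qed
  then show "\<exists>d. hom C d (cod C i) (dom C q) \<and> comp C d i = u \<and> comp C q d = v"
    using d i unfolding hom_def by auto
qed

end

context
  fixes C :: "('o, 'm) cat" and W Cof Fib
  assumes model: "model_category C W Cof Fib"
begin

lemma model_category_category: "category C"
  using model unfolding model_category_def by (elim conjE)

lemma model_category_arr:
  shows "W \<subseteq> arr C" and "Cof \<subseteq> arr C" and "Fib \<subseteq> arr C"
  using model by (simp_all add: model_category_def)

lemma model_category_initial:
  obtains z where "initial C z"
  using model unfolding model_category_def finitely_cocomplete_def by (elim conjE exE)

lemma model_category_pushout: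
  assumes "hom C f a b" and "hom C g a c"
  obtains i j P where "pushout C f g i j P"
proof -
  have "\<forall>f \<in> arr C. \<forall>g \<in> arr C. dom C f = dom C g \<longrightarrow> (\<exists>i j P. pushout C f g i j P)"
    using model unfolding model_category_def finitely_cocomplete_def by (elim conjE)
  moreover have "f \<in> arr C" and "g \<in> arr C" and "dom C f = dom C g"
    using assms unfolding hom_def by auto
  ultimately show ?thesis
    using that by blast
qed

lemma weq_cancel_left:
  assumes "hom C f a b" and "hom C g b c" and "f \<in> W" and "comp C g f \<in> W"
  shows "g \<in> W"
proof -
  have "\<forall>f \<in> arr C. \<forall>g \<in> arr C. cod C f = dom C g \<longrightarrow> f \<in> W \<and> comp C g f \<in> W \<longrightarrow> g \<in> W"
    using model unfolding model_category_def by (elim conjE) blast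
  then show ?thesis
    using assms unfolding hom_def by auto
qed

lemma trivial_cofibration_llp_fibration: "i \<in> Cof \<inter> W \<Longrightarrow> q \<in> Fib \<Longrightarrow> llp C i q"
  using model unfolding model_category_def by (elim conjE) blast

lemma trivial_cofibration_fibration_factorization:
  assumes "f \<in> arr C"
  obtains i q where "i \<in> Cof \<inter> W" and "q \<in> Fib" and "cod C i = dom C q" and "comp C q i = f"
proof -
  have "\<forall>f \<in> arr C. \<exists>i q. i \<in> Cof \<inter> W \<and> q \<in> Fib \<and> cod C i = dom C q \<and> comp C q i = f"
    using model unfolding model_category_def by (elim conjE)
  then show ?thesis
    using assms that by blast
qed

lemma weq_retract:
  assumes g: "g \<in> W" and f: "hom C f a b" and "hom C g a' b'"
    and "hom C i1 a a'" and "hom C r1 a' a" and "hom C i2 b b'" and "hom C r2 b' b"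
    and "comp C r1 i1 = ident C a" and "comp C r2 i2 = ident C b"
    and "comp C g i1 = comp C i2 f" and "comp C f r1 = comp C r2 g"
  shows "f \<in> W"
proof -
  have "\<forall>f g. retract_of C f g \<longrightarrow> g \<in> W \<longrightarrow> f \<in> W"
    using model unfolding model_category_def by (elim conjE) blast
  moreover have "retract_of C f g"
    unfolding retract_of_def using assms hom_arr by (auto simp: hom_def)
  ultimately show ?thesis
    using g by blast
qed

text \<open>The retract argument: factor \<open>f\<close> as a trivial cofibration followed by a
  fibration and lift \<open>f\<close> against the fibration; \<open>f\<close> is then a retract of the
  trivial cofibration.\<close>
lemma weq_if_llp_fibrations:
  assumes f: "hom C f A B" and llp: "\<forall>q \<in> Fib. llp C f q"
  shows "f \<in> W"
proof -
  note cat = model_category_category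
  obtain i q where iW: "i \<in> Cof \<inter> W" and qF: "q \<in> Fib" and iq: "cod C i = dom C q"
    and qi: "comp C q i = f"
    using trivial_cofibration_fibration_factorization[OF hom_arr[OF f]] .
  define Z where "Z = cod C i"
  have i0: "hom C i (dom C i) Z" and q0: "hom C q Z (cod C q)"
    using iW qF model_category_arr iq unfolding Z_def hom_def by auto
  then have "dom C i = A" and "cod C q = B"
    using hom_comp[OF cat i0 q0] f qi unfolding hom_def by auto
  then have i: "hom C i A Z" and q: "hom C q Z B"
    using i0 q0 by simp_all
  have A: "A \<in> obj C" and B: "B \<in> obj C"
    using hom_objs[OF cat f] by auto
  have "comp C q i = comp C (ident C B) f"
    using qi comp_ident_left[OF cat f] by simp
  then obtain d where d: "hom C d B Z" "comp C d f = i" "comp C q d = ident C B"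
    using llpD[OF _ f q i hom_ident[OF cat B]] llp qF by blast
  show ?thesis
  proof (rule weq_retract[OF _ f i hom_ident[OF cat A] hom_ident[OF cat A] d(1) q])
    show "comp C i (ident C A) = comp C d f" and "comp C f (ident C A) = comp C q i"
      using comp_ident_right[OF cat i] comp_ident_right[OF cat f] d qi by simp_all
  qed (use iW d comp_ident_left[OF cat hom_ident[OF cat A]] in auto)
qed

lemma weq_pushout_trivial_cofibration:
  assumes po: "pushout C f g i j P" and g: "g \<in> Cof \<inter> W"
  shows "i \<in> W"
proof (rule weq_if_llp_fibrations)
  show "hom C i (cod C f) P"
    using po unfolding pushout_def by blast
  show "\<forall>q \<in> Fib. llp C i q"
    using llp_pushout[OF model_category_category po] trivial_cofibration_llp_fibration[OF g]
      model_category_arr(3) by blast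
qed

lemma weakly_contractible_weq_target:
  assumes Y: "weakly_contractible C W Y" and e: "hom C e Y Q" and eW: "e \<in> W"
  shows "weakly_contractible C W Q"
  unfolding weakly_contractible_def
proof (intro conjI allI impI)
  show "Q \<in> obj C"
    using hom_objs(2)[OF model_category_category e] .
  fix t f
  assume t: "terminal C t" and f: "hom C f Q t"
  have "comp C f e \<in> W"
    using Y t hom_comp[OF model_category_category e f] unfolding weakly_contractible_def by blast
  then show "f \<in> W"
    by (rule weq_cancel_left[OF e f eW])
qed

lemma weakly_contractible_retract:
  assumes Q: "weakly_contractible C W Q"
    and a: "hom C a X Q" and b: "hom C b Q X" and ba: "comp C b a = ident C X"
  shows "weakly_contractible C W X"
  unfolding weakly_contractible_def
proof (intro conjI allI impI)
  note cat = model_category_category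
  show "X \<in> obj C"
    using hom_objs(1)[OF cat a] .
  fix t f
  assume t: "terminal C t" and f: "hom C f X t"
  have t': "hom C (ident C t) t t"
    using hom_ident[OF cat] t unfolding terminal_def by blast
  have fb: "hom C (comp C f b) Q t"
    using hom_comp[OF cat b f] .
  have "comp C f b \<in> W"
    using Q t fb unfolding weakly_contractible_def by blast
  moreover have "comp C (comp C f b) a = comp C (ident C t) f"
    using comp_assoc[OF cat a b f] ba comp_ident_right[OF cat f] comp_ident_left[OF cat f] by simp
  ultimately show "f \<in> W"
    using weq_retract[OF _ f fb a b t' t' ba] comp_ident_left[OF cat t'] comp_ident_left[OF cat fb]
    by simp
qed

end

text \<open>The Leibniz product of \<open>d\<close> with \<open>0 \<rightarrow> X\<close> is \<open>d X\<close>, since \<open>Cyl(0)\<close> is initial.\<close>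
lemma endpoint_inclusion_trivial_cofibration:
  assumes model: "model_category C W Cof Fib"
    and F: "is_functor C Cylo Cyla" and L: "left_adjoint C Cylo Cyla"
    and d: "nat_trans C id id Cylo Cyla d" and leibniz: "leibniz_endpoint_ok C W Cof Cylo Cyla d"
    and X: "cofibrant C Cof X"
  shows "d X \<in> Cof \<inter> W"
proof -
  note cat = model_category_category[OF model]
  obtain z where z: "initial C z"
    using model_category_initial[OF model] .
  have Cz: "initial C (Cylo z)"
    using left_adjoint_preserves_initial[OF cat F L z] .
  have Xo: "X \<in> obj C"
    using X unfolding cofibrant_def by blast
  obtain m where m: "hom C m z X"
    using initial_hom_ex[OF z Xo] by blast
  obtain j where j: "hom C j (Cylo z) X"
    using initial_hom_ex[OF Cz Xo] by blast
  have dz: "hom C (d z) z (Cylo z)" and dX: "hom C (d X) X (Cylo X)"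
    using nat_trans_hom[OF d] z Xo unfolding initial_def by auto
  have mC: "m \<in> Cof"
    using X z m unfolding cofibrant_def by blast
  have md: "dom C m = z" "cod C m = X"
    using m unfolding hom_def by auto
  note leibniz_m = leibniz[unfolded leibniz_endpoint_ok_def, rule_format, OF mC, unfolded md]
  show ?thesis
  proof (rule leibniz_m[OF pushout_between_initials[OF cat z Cz m dz j] dX])
    show "comp C (d X) (ident C X) = d X"
      using comp_ident_right[OF cat dX] .
    show "comp C (d X) j = Cyla m"
      using initial_hom_unique[OF cat Cz hom_comp[OF cat j dX] functor_hom[OF F m]] .
  qed
qed

theorem mainTheorem10:
  fixes C :: "('o, 'm) cat"
  assumes cyl: "cylindrical_model_category C W Cof Fib Cylo Cyla d0 d1 p"
    and s: "hom C s X Y" and r: "hom C r Y X"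
    and h: "hom C h (Cylo X) X"
    and h0: "comp C h (d0 X) = comp C r s"
    and h1: "comp C h (d1 X) = ident C X"
    and cofX: "cofibrant C Cof X"
    and contrY: "weakly_contractible C W Y"
  shows "weakly_contractible C W X"
proof -
  have model: "model_category C W Cof Fib" and cylinder: "functorial_cylinder C Cylo Cyla d0 d1 p"
    and leibniz: "leibniz_endpoint_ok C W Cof Cylo Cyla d0"
    using cyl unfolding cylindrical_model_category_def by auto
  note cat = model_category_category[OF model]
  have F: "is_functor C Cylo Cyla" and L: "left_adjoint C Cylo Cyla"
    and d0: "nat_trans C id id Cylo Cyla d0" and d1: "nat_trans C id id Cylo Cyla d1"
    using cylinder unfolding functorial_cylinder_def by auto
  have Xo: "X \<in> obj C"
    using cofX unfolding cofibrant_def by blast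
  have d0X: "hom C (d0 X) X (Cylo X)" and d1X: "hom C (d1 X) X (Cylo X)"
    using nat_trans_hom[OF d0 Xo] nat_trans_hom[OF d1 Xo] by simp_all
  obtain e k Q where po: "pushout C s (d0 X) e k Q"
    using model_category_pushout[OF model s d0X] .
  have e: "hom C e Y Q" and k: "hom C k (Cylo X) Q"
    using po s d0X unfolding pushout_def hom_def by auto
  have d0_trivial: "d0 X \<in> Cof \<inter> W"
    using endpoint_inclusion_trivial_cofibration[OF model F L d0 leibniz cofX] .
  have Q: "weakly_contractible C W Q"
    using weakly_contractible_weq_target[OF model contrY e
        weq_pushout_trivial_cofibration[OF model po d0_trivial]] .
  have "cod C s = Y" and "cod C (d0 X) = Cylo X"
    using s d0X unfolding hom_def by auto
  then obtain H where H: "hom C H Q X" "comp C H k = h"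
    using pushout_induced[OF po _ _ h0[symmetric]] r h by metis
  have "comp C H (comp C k (d1 X)) = ident C X"
    using comp_assoc[OF cat d1X k H(1)] H(2) h1 by simp
  then show ?thesis
    using weakly_contractible_retract[OF model Q hom_comp[OF cat d1X k] H(1)] by blast
qed

end
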